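(* Let $p$ be a prime, $n\ge1$, $d\ge2$, $I\subseteq\{0,\dots,n\}$, and let ${\bf a}_1,\dots,{\bf a}_N\in\mathbb{N}^{n+1}$ have coordinate sums $d$. Suppose $N\geq\mu_I+|U^I_{\min}|$ and that for each $u\in U^I_{\min}$ there exists $k_u$ with $1\le k_u\le|U^I_{\min}|$ such that $u={\bf a}^+_{\mu_I+k_u}+\sum_{j=1}^{\mu_I}{\bf a}_j^+$. Then the matrix $\bar A^I(\Lambda)$ is invertible (as a matrix over $\mathbb{F}_p(\Lambda_1,\dots,\Lambda_N)$, i.e. $\det\bar A^I(\Lambda)$ is a nonzero polynomial).
   Context: ${\bf a}_j^+=({\bf a}_j,1)\in\mathbb{N}^{n+2}$. The integer $\mu_I$ is defined by $\lceil |I|/d\rceil=\mu_I+1$. $U^I$ is the set of $u=(u_0,\dots,u_{n+1})\in\mathbb{N}^{n+2}$ with $\sum_{i=0}^nu_i=du_{n+1}$ and $u_i>0$ for all $i\in I$; $U^I_{\min}=\{u\in U^I: u_{n+1}=\mu_I+1\}$. The matrix $A^I(\Lambda)=[A^I_{uv}(\Lambda)]_{u,v\in U^I_{\min}}$ has entries $$A^I_{uv}(\Lambda)=(-1)^{\mu_I+1}\sum_{\nu\in\mathbb{N}^N,\ \sum_j\nu_j{\bf a}_j^+=pu-v}\frac{\Lambda_1^{\nu_1}\cdots\Lambda_N^{\nu_N}}{\nu_1!\cdots\nu_N!},$$ which lie in $(\mathbb{Q}\cap\mathbb{Z}_p)[\Lambda]$, and $\bar A^I(\Lambda)$ is its reduction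 modulo $p$. *)

theory Defs
  imports "HOL-Library.Poly_Mapping" "HOL-Combinatorics.Permutations"
    "Berlekamp_Zassenhaus.Finite_Field"
begin

text \<open>Vectors in N^(n+2) are functions nat => nat vanishing above n+1.
  The vectors a_1..a_N in N^(n+1) are given by a :: nat => nat => nat,
  a j i being the i-th coordinate (0 <= i <= n) of a_j.\<close>

definition aplus :: "(nat \<Rightarrow> nat \<Rightarrow> nat) \<Rightarrow> nat \<Rightarrow> nat \<Rightarrow> nat \<Rightarrow> nat" where
  "aplus a n j = (\<lambda>i. if i \<le> n then a j i else if i = n + 1 then 1 else 0)"

definition muI :: "nat set \<Rightarrow> nat \<Rightarrow> int" where
  "muI I d = \<lceil>(of_nat (card I) :: rat) / of_nat d\<rceil> - 1"

definition UI :: "nat \<Rightarrow> nat \<Rightarrow> nat set \<Rightarrow> (nat \<Rightarrow> nat) set" where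
  "UI n d I = {u. (\<forall>i > n + 1. u i = 0) \<and> (\<Sum>i\<le>n. u i) = d * u (n + 1)
                  \<and> (\<forall>i\<in>I. u i > 0)}"

definition UImin :: "nat \<Rightarrow> nat \<Rightarrow> nat set \<Rightarrow> (nat \<Rightarrow> nat) set" where
  "UImin n d I = {u \<in> UI n d I. int (u (n + 1)) = muI I d + 1}"

text \<open>Polynomials in Lambda_1..Lambda_N: exponent vectors nu are (nat =>0 nat),
  lookup nu j = nu_j.\<close>
definition AI :: "nat \<Rightarrow> nat \<Rightarrow> nat \<Rightarrow> nat \<Rightarrow> nat set \<Rightarrow> (nat \<Rightarrow> nat \<Rightarrow> nat)
    \<Rightarrow> (nat \<Rightarrow> nat) \<Rightarrow> (nat \<Rightarrow> nat) \<Rightarrow> ((nat \<Rightarrow>\<^sub>0 nat) \<Rightarrow>\<^sub>0 rat)" where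
  "AI p n d N I a u v =
     (\<Sum>\<nu>\<in>{\<nu>. Poly_Mapping.keys \<nu> \<subseteq> {1..N} \<and>
            (\<forall>i. (\<Sum>j\<in>{1..N}. Poly_Mapping.lookup \<nu> j * aplus a n j i) + v i = p * u i)}.
        Poly_Mapping.single \<nu>
          ((-1) ^ nat (muI I d + 1) / (\<Prod>j\<in>{1..N}. fact (Poly_Mapping.lookup \<nu> j))))"

text \<open>Reduction modulo p of a rational number (meaningful for p-integral rationals).\<close>
definition red_mod :: "rat \<Rightarrow> 'p::prime_card mod_ring" where
  "red_mod r = of_int (fst (quotient_of r)) / of_int (snd (quotient_of r))"

definition AIbar :: "nat \<Rightarrow> nat \<Rightarrow> nat \<Rightarrow> nat set \<Rightarrow> (nat \<Rightarrow> nat \<Rightarrow> nat)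
    \<Rightarrow> (nat \<Rightarrow> nat) \<Rightarrow> (nat \<Rightarrow> nat) \<Rightarrow> ((nat \<Rightarrow>\<^sub>0 nat) \<Rightarrow>\<^sub>0 'p::prime_card mod_ring)" where
  "AIbar n d N I a u v = Poly_Mapping.map red_mod (AI CARD('p) n d N I a u v)"

definition det_on :: "'i set \<Rightarrow> ('i \<Rightarrow> 'i \<Rightarrow> 'r::comm_ring_1) \<Rightarrow> 'r" where
  "det_on S M = (\<Sum>\<sigma>\<in>{\<sigma>. \<sigma> permutes S}. of_int (sign \<sigma>) * (\<Prod>u\<in>S. M u (\<sigma> u)))"

end

theory Submission
  imports Defs
begin

text \<open>Look at the monomial \<open>\<Lambda>\<^sup>\<nu>\<close> with \<open>\<nu> = \<Sum>\<^sub>u \<nu>\<^sub>u\<close>, where \<open>\<nu>\<^sub>u\<close> puts the exponent \<open>p - 1\<close>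
  on \<open>\<Lambda>\<^sub>1, \<dots>, \<Lambda>\<^sub>\<mu>\<close> and on \<open>\<Lambda>\<^sub>\<mu>\<^sub>+\<^sub>k\<^sub>u\<close>. The diagonal term of the Leibniz expansion of
  \<open>det A\<^sup>I\<close> contributes it with coefficient \<open>\<plusminus>1/((p - 1)!)\<^sup>\<mu>\<^sup>+\<^sup>1\<close> per row, a unit mod \<open>p\<close>.
  Any other term contributing it with a coefficient that is nonzero mod \<open>p\<close> uses only
  exponents below \<open>p\<close>; comparing exponents variable by variable then forces every row onto
  \<open>\<Lambda>\<^sub>1, \<dots>, \<Lambda>\<^sub>\<mu>\<close> and the \<open>\<Lambda>\<^sub>\<mu>\<^sub>+\<^sub>k\<^sub>v\<close>, and the resulting exponent matrix, tested against an
  injective linear encoding of the vectors \<open>a\<^sup>+\<^sub>\<mu>\<^sub>+\<^sub>k\<^sub>v\<close>, must be \<open>(p - 1)\<close> times the identity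
  with the identity permutation.\<close>

lemma prod_single:
  fixes g :: "'a \<Rightarrow> 'k::comm_monoid_add" and h :: "'a \<Rightarrow> 'r::comm_semiring_1"
  assumes "finite A"
  shows "(\<Prod>x\<in>A. Poly_Mapping.single (g x) (h x)) = Poly_Mapping.single (\<Sum>x\<in>A. g x) (\<Prod>x\<in>A. h x)"
  using assms by (induction A rule: finite_induct) (simp_all add: mult_single)

lemma lookup_det_on_sum_single:
  fixes M :: "'i \<Rightarrow> 'i \<Rightarrow> ('k::comm_monoid_add \<Rightarrow>\<^sub>0 'r::comm_ring_1)"
  assumes U: "finite U" and S: "\<And>u v. finite (S u v)"
    and M: "\<And>u v. u \<in> U \<Longrightarrow> v \<in> U \<Longrightarrow> M u v = (\<Sum>\<nu>\<in>S u v. Poly_Mapping.single \<nu> (c \<nu>))"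
  shows "Poly_Mapping.lookup (det_on U M) t =
    (\<Sum>\<sigma>\<in>{\<sigma>. \<sigma> permutes U}. \<Sum>f\<in>PiE U (\<lambda>u. S u (\<sigma> u)).
        if (\<Sum>u\<in>U. f u) = t then of_int (sign \<sigma>) * (\<Prod>u\<in>U. c (f u)) else 0)"
proof -
  have "of_int (sign \<sigma>) * (\<Prod>u\<in>U. M u (\<sigma> u)) =
     (\<Sum>f\<in>PiE U (\<lambda>u. S u (\<sigma> u)).
        Poly_Mapping.single (\<Sum>u\<in>U. f u) (of_int (sign \<sigma>) * (\<Prod>u\<in>U. c (f u))))"
    if \<sigma>: "\<sigma> permutes U" for \<sigma>
  proof -
    have "(\<Prod>u\<in>U. M u (\<sigma> u)) = (\<Prod>u\<in>U. \<Sum>\<nu>\<in>S u (\<sigma> u). Poly_Mapping.single \<nu> (c \<nu>))"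
      using M permutes_in_image[OF \<sigma>] by (intro prod.cong) auto
    also have "\<dots> = (\<Sum>f\<in>PiE U (\<lambda>u. S u (\<sigma> u)). \<Prod>u\<in>U. Poly_Mapping.single (f u) (c (f u)))"
      using U S by (intro prod_sum_PiE) auto
    also have "\<dots> = (\<Sum>f\<in>PiE U (\<lambda>u. S u (\<sigma> u)). Poly_Mapping.single (\<Sum>u\<in>U. f u) (\<Prod>u\<in>U. c (f u)))"
      using U by (simp add: prod_single)
    finally show ?thesis
      by (simp add: sum_distrib_left mult_single flip: single_of_int)
  qed
  then show ?thesis
    unfolding det_on_def lookup_sum
    by (intro sum.cong) (auto simp: lookup_sum lookup_single when_def)
qed

lemma det_on_neq_0_by_unique_term:
  fixes M :: "'i \<Rightarrow> 'i \<Rightarrow> ('k::comm_monoid_add \<Rightarrow>\<^sub>0 'r::idom)"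
  assumes U: "finite U" and S: "\<And>u v. finite (S u v)"
    and M: "\<And>u v. u \<in> U \<Longrightarrow> v \<in> U \<Longrightarrow> M u v = (\<Sum>\<nu>\<in>S u v. Poly_Mapping.single \<nu> (c \<nu>))"
    and g_in: "\<And>u. u \<in> U \<Longrightarrow> g u \<in> S u u" and g_nonzero: "\<And>u. u \<in> U \<Longrightarrow> c (g u) \<noteq> 0"
    and unique: "\<And>\<sigma> f. \<sigma> permutes U \<Longrightarrow> f \<in> PiE U (\<lambda>u. S u (\<sigma> u)) \<Longrightarrow>
        (\<Sum>u\<in>U. f u) = (\<Sum>u\<in>U. g u) \<Longrightarrow> \<forall>u\<in>U. c (f u) \<noteq> 0 \<Longrightarrow> \<sigma> = id \<and> (\<forall>u\<in>U. f u = g u)"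
  shows "det_on U M \<noteq> 0"
proof -
  define t where "t \<sigma> f = (if (\<Sum>u\<in>U. f u) = (\<Sum>u\<in>U. g u)
    then of_int (sign \<sigma>) * (\<Prod>u\<in>U. c (f u)) else (0::'r))" for \<sigma> :: "'i \<Rightarrow> 'i" and f :: "'i \<Rightarrow> 'k"
  have vanish: "t \<sigma> f = 0"
    if "\<sigma> permutes U" "f \<in> PiE U (\<lambda>u. S u (\<sigma> u))" "\<not> (\<sigma> = id \<and> f = restrict g U)" for \<sigma> f
  proof (cases "(\<Sum>u\<in>U. f u) = (\<Sum>u\<in>U. g u) \<and> (\<forall>u\<in>U. c (f u) \<noteq> 0)")
    case True
    with unique[OF that(1,2)] have "\<sigma> = id" and fg: "\<forall>u\<in>U. f u = g u" by auto
    have "f = restrict g U"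
    proof
      fix x show "f x = restrict g U x"
        using fg PiE_arb[OF that(2), of x] by (cases "x \<in> U") simp_all
    qed
    with \<open>\<sigma> = id\<close> that(3) show ?thesis by blast
  next
    case False
    then show ?thesis using U by (auto simp: t_def)
  qed
  have g_PiE: "restrict g U \<in> PiE U (\<lambda>u. S u (id u))"
    using g_in by auto
  have "Poly_Mapping.lookup (det_on U M) (\<Sum>u\<in>U. g u) =
      (\<Sum>\<sigma>\<in>{\<sigma>. \<sigma> permutes U}. \<Sum>f\<in>PiE U (\<lambda>u. S u (\<sigma> u)). t \<sigma> f)"
    unfolding t_def by (rule lookup_det_on_sum_single[OF U S M])
  also have "\<dots> = (\<Sum>f\<in>PiE U (\<lambda>u. S u (id u)). t id f)"
    using U vanish permutes_id
    by (subst sum.mono_neutral_right[of _ "{id}"]) (auto intro!: sum.neutral simp: finite_permutations)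
  also have "\<dots> = t id (restrict g U)"
    using U S g_PiE vanish
    by (subst sum.mono_neutral_right[of _ "{restrict g U}"]) (auto intro!: finite_PiE)
  also have "\<dots> = (\<Prod>u\<in>U. c (g u))"
    by (auto simp: t_def intro!: sum.cong prod.cong)
  finally show ?thesis
    using U g_nonzero by auto
qed

lemma red_mod_unit_fraction:
  fixes s :: int and P :: nat
  assumes s: "s = 1 \<or> s = -1" and P: "P > 0"
  shows "(red_mod (of_int s / of_nat P) :: 'a::prime_card mod_ring) = of_int s / of_nat P"
proof -
  have "of_int s / of_nat P = Rat.Fract s (int P)"
    by (simp add: Fract_of_int_quotient)
  moreover have "coprime s (int P)" using s by auto
  ultimately have "quotient_of (of_int s / of_nat P) = (s, int P)"
    using P by (simp add: quotient_of_Fract)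
  then show ?thesis by (simp add: red_mod_def)
qed

definition AI_exponents :: "nat \<Rightarrow> nat \<Rightarrow> nat \<Rightarrow> (nat \<Rightarrow> nat \<Rightarrow> nat) \<Rightarrow> (nat \<Rightarrow> nat) \<Rightarrow> (nat \<Rightarrow> nat)
    \<Rightarrow> (nat \<Rightarrow>\<^sub>0 nat) set" where
  "AI_exponents p n N a u v = {\<nu>. Poly_Mapping.keys \<nu> \<subseteq> {1..N} \<and>
     (\<forall>i. (\<Sum>j\<in>{1..N}. Poly_Mapping.lookup \<nu> j * aplus a n j i) + v i = p * u i)}"

definition AI_coeff :: "nat set \<Rightarrow> nat \<Rightarrow> nat \<Rightarrow> (nat \<Rightarrow>\<^sub>0 nat) \<Rightarrow> rat" where
  "AI_coeff I d N \<nu> = (-1) ^ nat (muI I d + 1) / (\<Prod>j\<in>{1..N}. fact (Poly_Mapping.lookup \<nu> j))"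

lemma AI_eq_sum_single:
  "AI p n d N I a u v = (\<Sum>\<nu>\<in>AI_exponents p n N a u v. Poly_Mapping.single \<nu> (AI_coeff I d N \<nu>))"
  by (simp add: AI_def AI_exponents_def AI_coeff_def)

lemma finite_bounded_poly_mappings:
  assumes "finite A"
  shows "finite {\<nu> :: 'a \<Rightarrow>\<^sub>0 nat. Poly_Mapping.keys \<nu> \<subseteq> A \<and> (\<forall>j. Poly_Mapping.lookup \<nu> j \<le> C)}"
proof (rule finite_imageD)
  have "Poly_Mapping.lookup ` {\<nu>. Poly_Mapping.keys \<nu> \<subseteq> A \<and> (\<forall>j. Poly_Mapping.lookup \<nu> j \<le> C)}
      \<subseteq> {f. \<forall>j. (j \<in> A \<longrightarrow> f j \<in> {..C}) \<and> (j \<notin> A \<longrightarrow> f j = 0)}"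
    by (auto simp: in_keys_iff)
  then show "finite (Poly_Mapping.lookup ` {\<nu>. Poly_Mapping.keys \<nu> \<subseteq> A \<and> (\<forall>j. Poly_Mapping.lookup \<nu> j \<le> C)})"
    using assms by (rule finite_subset[OF _ finite_set_of_finite_funs]) simp
qed (simp add: inj_on_def poly_mapping_eqI)

lemma finite_AI_exponents: "finite (AI_exponents p n N a u v)"
proof -
  let ?S = "AI_exponents p n N a u v" and ?C = "p * u (n + 1)"
  have bounded: "Poly_Mapping.lookup \<nu> j \<le> ?C" if "\<nu> \<in> ?S" for \<nu> j
  proof (cases "j \<in> {1..N}")
    case True
    have "Poly_Mapping.lookup \<nu> j \<le> (\<Sum>j\<in>{1..N}. Poly_Mapping.lookup \<nu> j)"
      using True by (intro member_le_sum) auto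
    moreover have "(\<Sum>j\<in>{1..N}. Poly_Mapping.lookup \<nu> j) + v (n + 1) = ?C"
      using that by (auto simp: AI_exponents_def aplus_def dest: spec[of _ "n + 1"])
    ultimately show ?thesis by linarith
  next
    case False
    then have "j \<notin> Poly_Mapping.keys \<nu>" using that by (auto simp: AI_exponents_def)
    then show ?thesis by (simp add: in_keys_iff)
  qed
  have "?S \<subseteq> {\<nu>. Poly_Mapping.keys \<nu> \<subseteq> {1..N} \<and> (\<forall>j. Poly_Mapping.lookup \<nu> j \<le> ?C)}"
    using bounded by (auto simp: AI_exponents_def)
  then show ?thesis
    using finite_bounded_poly_mappings[of "{1..N}" ?C] by (rule finite_subset) simp
qed

lemma AIbar_eq_sum_single:
  "(AIbar n d N I a u v :: _ \<Rightarrow>\<^sub>0 'p::prime_card mod_ring) =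
     (\<Sum>\<nu>\<in>AI_exponents CARD('p) n N a u v. Poly_Mapping.single \<nu> (red_mod (AI_coeff I d N \<nu>)))"
proof (rule poly_mapping_eqI)
  fix \<mu>
  have "Poly_Mapping.lookup (AI CARD('p) n d N I a u v) \<mu> =
      (if \<mu> \<in> AI_exponents CARD('p) n N a u v then AI_coeff I d N \<mu> else 0)"
    by (simp add: AI_eq_sum_single lookup_sum lookup_single when_def finite_AI_exponents)
  then show "Poly_Mapping.lookup (AIbar n d N I a u v :: _ \<Rightarrow>\<^sub>0 'p mod_ring) \<mu> =
      Poly_Mapping.lookup (\<Sum>\<nu>\<in>AI_exponents CARD('p) n N a u v.
        Poly_Mapping.single \<nu> (red_mod (AI_coeff I d N \<nu>))) \<mu>"
    by (simp add: AIbar_def map.rep_eq lookup_sum lookup_single when_def finite_AI_exponents red_mod_def)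
qed

lemma red_mod_AI_coeff_neq_0_iff:
  "(red_mod (AI_coeff I d N \<nu>) :: 'a::prime_card mod_ring) \<noteq> 0 \<longleftrightarrow>
     (\<forall>j\<in>{1..N}. Poly_Mapping.lookup \<nu> j < CARD('a))"
proof -
  define s :: int where "s = (-1) ^ nat (muI I d + 1)"
  define P where "P = (\<Prod>j\<in>{1..N}. fact (Poly_Mapping.lookup \<nu> j) :: nat)"
  have s: "s = 1 \<or> s = -1" by (simp add: s_def minus_one_power_iff)
  have "AI_coeff I d N \<nu> = of_int s / of_nat P"
    by (simp add: AI_coeff_def s_def P_def)
  moreover have "P > 0" by (simp add: P_def prod_pos)
  ultimately have "(red_mod (AI_coeff I d N \<nu>) :: 'a mod_ring) = of_int s / of_nat P"
    using red_mod_unit_fraction[OF s] by simp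
  moreover have "(of_int s :: 'a mod_ring) \<noteq> 0" using s by auto
  moreover have "(of_nat P :: 'a mod_ring) = 0 \<longleftrightarrow> (\<exists>j\<in>{1..N}. CARD('a) \<le> Poly_Mapping.lookup \<nu> j)"
    using prime_card[where 'a='a]
    by (simp add: of_nat_eq_0_iff_char_dvd P_def prime_dvd_prod_iff prime_dvd_fact_iff)
  ultimately show ?thesis by (auto simp: not_le)
qed

lemma radix_sum_less:
  fixes x :: "nat \<Rightarrow> nat"
  assumes "\<forall>i<L. x i < D"
  shows "(\<Sum>i<L. x i * D ^ i) < D ^ L"
  using assms
proof (induction L)
  case (Suc L)
  have "(\<Sum>i<Suc L. x i * D ^ i) < D ^ L + x L * D ^ L" using Suc by simp
  also have "\<dots> \<le> D ^ L + (D - 1) * D ^ L" using Suc.prems by (intro add_left_mono mult_right_mono) auto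
  also have "\<dots> = D ^ Suc L" using Suc.prems by (cases D) (auto simp: algebra_simps)
  finally show ?case .
qed simp

lemma radix_sum_inj:
  fixes x y :: "nat \<Rightarrow> nat"
  assumes "\<forall>i<L. x i < D" "\<forall>i<L. y i < D" "(\<Sum>i<L. x i * D ^ i) = (\<Sum>i<L. y i * D ^ i)"
  shows "\<forall>i<L. x i = y i"
  using assms
proof (induction L)
  case (Suc L)
  have x: "(\<Sum>i<L. x i * D ^ i) < D ^ L" and y: "(\<Sum>i<L. y i * D ^ i) < D ^ L"
    using Suc.prems by (auto intro: radix_sum_less)
  have eq: "(\<Sum>i<L. x i * D ^ i) + x L * D ^ L = (\<Sum>i<L. y i * D ^ i) + y L * D ^ L"
    using Suc.prems(3) by simp
  have "D ^ L \<noteq> 0" using x by (metis less_nat_zero_code)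
  then have "x L = ((\<Sum>i<L. x i * D ^ i) + x L * D ^ L) div D ^ L"
    and "y L = ((\<Sum>i<L. y i * D ^ i) + y L * D ^ L) div D ^ L"
    using x y by simp_all
  then have "x L = y L" using eq by simp
  moreover have "\<forall>i<L. x i = y i"
    using eq \<open>x L = y L\<close> Suc.prems by (intro Suc.IH) simp_all
  ultimately show ?case by (simp add: less_Suc_eq)
qed simp

lemma radix_sum_linear_combination:
  fixes c :: "'v \<Rightarrow> nat" and x :: "'v \<Rightarrow> nat \<Rightarrow> nat"
  assumes "\<And>i. (\<Sum>v\<in>V. c v * x v i) + y i = q * z i"
  shows "(\<Sum>v\<in>V. c v * (\<Sum>i<L. x v i * D ^ i)) + (\<Sum>i<L. y i * D ^ i) = q * (\<Sum>i<L. z i * D ^ i)"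
proof -
  have "(\<Sum>v\<in>V. c v * (\<Sum>i<L. x v i * D ^ i)) = (\<Sum>i<L. (\<Sum>v\<in>V. c v * x v i) * D ^ i)"
    by (simp add: sum_distrib_left sum_distrib_right mult.assoc sum.swap[of _ V])
  then show ?thesis
    by (simp add: assms sum_distrib_left mult.assoc flip: sum.distrib distrib_right)
qed

text \<open>Rows are peeled off by decreasing weight: once all heavier rows are known to be
  diagonal, the column sums leave no room for entries of the current row in heavier columns,
  and then the row identity can only hold if all its inequalities are equalities.\<close>

lemma balanced_row_diagonal:
  fixes \<nu> :: "'u \<Rightarrow> 'u \<Rightarrow> nat" and \<beta> :: "'u \<Rightarrow> nat"
  assumes fin: "finite U" and perm: "\<sigma> permutes U" and inj: "inj_on \<beta> U" and u: "u \<in> U"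
    and row: "(\<Sum>v\<in>U. \<nu> u v * \<beta> v) + \<beta> (\<sigma> u) = p * \<beta> u"
    and rowsum: "(\<Sum>v\<in>U. \<nu> u v) + 1 = p"
    and colsum: "\<And>v. v \<in> U \<Longrightarrow> (\<Sum>w\<in>U. \<nu> w v) = p - 1"
    and heavier: "\<And>w. w \<in> U \<Longrightarrow> \<beta> u < \<beta> w \<Longrightarrow> \<sigma> w = w \<and> \<nu> w w = p - 1"
  shows "\<sigma> u = u \<and> (\<forall>v\<in>U. \<nu> u v = (if v = u then p - 1 else 0))"
proof -
  have heavier_column: "\<nu> u v = 0" if v: "v \<in> U" "\<beta> u < \<beta> v" for v
  proof -
    have "u \<noteq> v" using v by auto
    then have "\<nu> u v + \<nu> v v = (\<Sum>w\<in>{u, v}. \<nu> w v)" by simp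
    also have "\<dots> \<le> (\<Sum>w\<in>U. \<nu> w v)" using fin u v(1) by (intro sum_mono2) auto
    finally have "\<nu> u v + \<nu> v v \<le> p - 1" using colsum[OF v(1)] by simp
    moreover have "\<nu> v v = p - 1" using heavier[OF v] by blast
    ultimately show ?thesis by linarith
  qed
  have le: "\<nu> u v * \<beta> v \<le> \<nu> u v * \<beta> u" if "v \<in> U" for v
    using heavier_column[OF that] by (cases "\<beta> u < \<beta> v") auto
  have sigma_le: "\<beta> (\<sigma> u) \<le> \<beta> u"
  proof (rule ccontr)
    assume gt: "\<not> \<beta> (\<sigma> u) \<le> \<beta> u"
    have "\<sigma> u \<in> U" using permutes_in_image[OF perm] u by simp
    then have "\<sigma> (\<sigma> u) = \<sigma> u" using heavier gt by simp
    then have "\<sigma> u = u" using permutes_inj[OF perm] by (simp add: inj_eq)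
    then show False using gt by simp
  qed
  have "(\<Sum>v\<in>U. \<nu> u v) = p - 1" using rowsum by simp
  then have weighted: "(\<Sum>v\<in>U. \<nu> u v * \<beta> u) = (p - 1) * \<beta> u"
    by (simp flip: sum_distrib_right)
  have p: "p * \<beta> u = (p - 1) * \<beta> u + \<beta> u" using rowsum by (cases p) auto
  have "(\<Sum>v\<in>U. \<nu> u v * \<beta> v) \<le> (\<Sum>v\<in>U. \<nu> u v * \<beta> u)"
    using le by (intro sum_mono)
  then have "\<beta> (\<sigma> u) = \<beta> u" and tight: "(\<Sum>v\<in>U. \<nu> u v * \<beta> v) = (\<Sum>v\<in>U. \<nu> u v * \<beta> u)"
    using row weighted sigma_le p by linarith+
  then have fixed: "\<sigma> u = u" using inj_onD[OF inj] permutes_in_image[OF perm] u by blast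
  have off_diagonal: "\<nu> u v = 0" if v: "v \<in> U" "v \<noteq> u" for v
  proof -
    have "\<nu> u v * \<beta> v = \<nu> u v * \<beta> u" using sum_mono_inv[OF tight le v(1) fin] .
    moreover have "\<beta> v \<noteq> \<beta> u" using inj_onD[OF inj _ v(1) u] v(2) by blast
    ultimately show ?thesis by simp
  qed
  have "(\<Sum>v\<in>U. \<nu> u v) = (\<Sum>v\<in>{u}. \<nu> u v)"
    by (rule sum.mono_neutral_right) (use fin u off_diagonal in auto)
  then show ?thesis using fixed off_diagonal rowsum by auto
qed

lemma balanced_matrix_diagonal:
  fixes \<nu> :: "'u \<Rightarrow> 'u \<Rightarrow> nat" and \<beta> :: "'u \<Rightarrow> nat"
  assumes fin: "finite U" and perm: "\<sigma> permutes U" and inj: "inj_on \<beta> U"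
    and row: "\<And>u. u \<in> U \<Longrightarrow> (\<Sum>v\<in>U. \<nu> u v * \<beta> v) + \<beta> (\<sigma> u) = p * \<beta> u"
    and rowsum: "\<And>u. u \<in> U \<Longrightarrow> (\<Sum>v\<in>U. \<nu> u v) + 1 = p"
    and colsum: "\<And>v. v \<in> U \<Longrightarrow> (\<Sum>u\<in>U. \<nu> u v) = p - 1"
    and u: "u \<in> U"
  shows "\<sigma> u = u \<and> (\<forall>v\<in>U. \<nu> u v = (if v = u then p - 1 else 0))"
  using u
proof (induction "Max (\<beta> ` U) - \<beta> u" arbitrary: u rule: less_induct)
  case less
  have heavier: "\<sigma> w = w \<and> \<nu> w w = p - 1" if w: "w \<in> U" "\<beta> u < \<beta> w" for w
  proof -
    have "\<beta> w \<le> Max (\<beta> ` U)" using fin w(1) by simp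
    then have "Max (\<beta> ` U) - \<beta> w < Max (\<beta> ` U) - \<beta> u" using w(2) by linarith
    then show ?thesis using less.hyps[OF _ w(1)] w(1) by auto
  qed
  show ?case
    using balanced_row_diagonal[OF fin perm inj less.prems row[OF less.prems] rowsum[OF less.prems] colsum heavier] .
qed

text \<open>\<open>m\<close> plays the role of \<open>\<mu>\<^sub>I\<close> and \<open>k u\<close> that of \<open>k\<^sub>u\<close>.\<close>

locale parametrized_rows =
  fixes p n d N m :: nat and a :: "nat \<Rightarrow> nat \<Rightarrow> nat"
    and U :: "(nat \<Rightarrow> nat) set" and k :: "(nat \<Rightarrow> nat) \<Rightarrow> nat"
  assumes p_pos: "0 < p"
    and coordinate_sum: "\<And>j. j \<in> {1..N} \<Longrightarrow> (\<Sum>i\<le>n. a j i) = d"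
    and finite_U: "finite U"
    and inj_k: "inj_on k U"
    and k_range: "\<And>u. u \<in> U \<Longrightarrow> 1 \<le> k u \<and> m + k u \<le> N"
    and row_decomp: "\<And>u. u \<in> U \<Longrightarrow> u = (\<lambda>i. aplus a n (m + k u) i + (\<Sum>j\<in>{1..m}. aplus a n j i))"
begin

definition base :: "nat \<Rightarrow> nat" where
  "base i = (\<Sum>j\<in>{1..m}. aplus a n j i)"

definition diag_exponent :: "(nat \<Rightarrow> nat) \<Rightarrow> (nat \<Rightarrow>\<^sub>0 nat)" where
  "diag_exponent u = (\<Sum>j\<in>insert (m + k u) {1..m}. Poly_Mapping.single j (p - 1))"

text \<open>The coordinates of \<open>a\<^sup>+\<^sub>j\<close> are at most \<open>max d 1\<close>, so reading them as base \<open>d + 2\<close>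
  digits gives an injective encoding of the rows that is linear in \<open>a\<^sup>+\<^sub>m\<^sub>+\<^sub>k\<^sub>u\<close>.\<close>

definition weight :: "(nat \<Rightarrow> nat) \<Rightarrow> nat" where
  "weight u = (\<Sum>i<n + 2. aplus a n (m + k u) i * (d + 2) ^ i)"

lemma row_eq: "u \<in> U \<Longrightarrow> u i = aplus a n (m + k u) i + base i"
  using row_decomp by (metis base_def)

lemma lookup_diag_exponent:
  "Poly_Mapping.lookup (diag_exponent u) j = (if j \<in> insert (m + k u) {1..m} then p - 1 else 0)"
  by (simp add: diag_exponent_def lookup_sum lookup_single when_def)

lemma diag_exponent_in_AI_exponents:
  assumes u: "u \<in> U"
  shows "diag_exponent u \<in> AI_exponents p n N a u u"
proof -
  have support: "insert (m + k u) {1..m} \<subseteq> {1..N}" using k_range[OF u] by auto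
  have "(\<Sum>j\<in>{1..N}. Poly_Mapping.lookup (diag_exponent u) j * aplus a n j i) + u i = p * u i" for i
  proof -
    have "(\<Sum>j\<in>{1..N}. Poly_Mapping.lookup (diag_exponent u) j * aplus a n j i) =
        (\<Sum>j\<in>insert (m + k u) {1..m}. (p - 1) * aplus a n j i)"
      using support by (subst sum.mono_neutral_right[OF _ support]) (auto simp: lookup_diag_exponent)
    also have "\<dots> = (p - 1) * u i"
      using k_range[OF u] by (simp add: row_eq[OF u] base_def sum_distrib_left distrib_left)
    finally show ?thesis using p_pos by (cases p) auto
  qed
  moreover have "Poly_Mapping.keys (diag_exponent u) \<subseteq> {1..N}"
    using support by (auto simp: in_keys_iff lookup_diag_exponent split: if_splits)
  ultimately show ?thesis by (simp add: AI_exponents_def)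
qed

lemma inj_on_weight: "inj_on weight U"
proof (rule inj_onI)
  fix u v assume u: "u \<in> U" and v: "v \<in> U" and eq: "weight u = weight v"
  have digit: "aplus a n (m + k w) i < d + 2" if "w \<in> U" for w i
  proof -
    have "a (m + k w) i \<le> (\<Sum>i\<le>n. a (m + k w) i)" if "i \<le> n" using that by (intro member_le_sum) auto
    then show ?thesis using coordinate_sum[of "m + k w"] k_range[OF \<open>w \<in> U\<close>] by (auto simp: aplus_def)
  qed
  have "\<forall>i<n + 2. aplus a n (m + k u) i = aplus a n (m + k v) i"
    using eq digit[OF u] digit[OF v] unfolding weight_def by (intro radix_sum_inj) auto
  then have "aplus a n (m + k u) i = aplus a n (m + k v) i" for i
    by (cases "i < n + 2") (auto simp: aplus_def)
  then show "u = v" using row_eq[OF u] row_eq[OF v] by (intro ext) metis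
qed

text \<open>\<open>\<sigma>\<close> and \<open>f\<close> describe a term of the Leibniz expansion of \<open>det A\<^sup>I\<close> that contributes to
  the monomial \<open>\<Sum>\<^sub>u diag_exponent u\<close> with a coefficient that is nonzero mod \<open>p\<close>.\<close>

context
  fixes \<sigma> :: "(nat \<Rightarrow> nat) \<Rightarrow> (nat \<Rightarrow> nat)" and f :: "(nat \<Rightarrow> nat) \<Rightarrow> (nat \<Rightarrow>\<^sub>0 nat)"
  assumes perm: "\<sigma> permutes U"
    and f_in: "\<And>u. u \<in> U \<Longrightarrow> f u \<in> AI_exponents p n N a u (\<sigma> u)"
    and f_less: "\<And>u j. u \<in> U \<Longrightarrow> j \<in> {1..N} \<Longrightarrow> Poly_Mapping.lookup (f u) j < p"
    and f_sum: "(\<Sum>u\<in>U. f u) = (\<Sum>u\<in>U. diag_exponent u)"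
begin

lemma sum_lookup_f: "(\<Sum>u\<in>U. Poly_Mapping.lookup (f u) j) = (\<Sum>u\<in>U. Poly_Mapping.lookup (diag_exponent u) j)"
  using arg_cong[OF f_sum, of "\<lambda>x. Poly_Mapping.lookup x j"] by (simp add: lookup_sum)

lemma lookup_f_base:
  assumes u: "u \<in> U" and j: "j \<in> {1..m}"
  shows "Poly_Mapping.lookup (f u) j = p - 1"
proof (rule sum_mono_inv[OF _ _ u finite_U])
  show "(\<Sum>w\<in>U. Poly_Mapping.lookup (f w) j) = (\<Sum>w\<in>U. p - 1)"
    using j by (simp add: sum_lookup_f lookup_diag_exponent)
  show "Poly_Mapping.lookup (f w) j \<le> p - 1" if "w \<in> U" for w
    using f_less[OF that] j k_range[OF that] by fastforce
qed

lemma lookup_f_outside: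
  assumes u: "u \<in> U" and j: "j \<notin> {1..m}" "j \<notin> (\<lambda>v. m + k v) ` U"
  shows "Poly_Mapping.lookup (f u) j = 0"
proof -
  have "(\<Sum>w\<in>U. Poly_Mapping.lookup (f w) j) = 0"
    using j by (auto simp: sum_lookup_f lookup_diag_exponent intro!: sum.neutral)
  then show ?thesis using finite_U u by simp
qed

lemma column_sum_lookup_f:
  assumes v: "v \<in> U"
  shows "(\<Sum>u\<in>U. Poly_Mapping.lookup (f u) (m + k v)) = p - 1"
proof -
  have "(\<Sum>u\<in>U. Poly_Mapping.lookup (diag_exponent u) (m + k v)) =
      (\<Sum>u\<in>{v}. Poly_Mapping.lookup (diag_exponent u) (m + k v))"
    using finite_U v k_range[OF v] inj_onD[OF inj_k _ _ v]
    by (intro sum.mono_neutral_right) (auto simp: lookup_diag_exponent)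
  then show ?thesis by (simp add: sum_lookup_f lookup_diag_exponent)
qed

lemma row_identity_lookup_f:
  assumes u: "u \<in> U"
  shows "(\<Sum>v\<in>U. Poly_Mapping.lookup (f u) (m + k v) * aplus a n (m + k v) i)
      + aplus a n (m + k (\<sigma> u)) i = p * aplus a n (m + k u) i"
proof -
  let ?h = "\<lambda>j. Poly_Mapping.lookup (f u) j * aplus a n j i" and ?tops = "(\<lambda>v. m + k v) ` U"
  have disjoint: "{1..m} \<inter> ?tops = {}" using k_range by fastforce
  have tops: "{1..m} \<union> ?tops \<subseteq> {1..N}" using k_range u by fastforce
  have "(\<Sum>j\<in>{1..N}. ?h j) + \<sigma> u i = p * u i"
    using f_in[OF u] by (simp add: AI_exponents_def)
  moreover have "(\<Sum>j\<in>{1..N}. ?h j) = (\<Sum>j\<in>{1..m}. ?h j) + (\<Sum>j\<in>?tops. ?h j)"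
    using tops disjoint finite_U lookup_f_outside[OF u]
    by (subst sum.mono_neutral_right[OF _ tops]) (auto intro: sum.union_disjoint)
  moreover have "(\<Sum>j\<in>{1..m}. ?h j) = (p - 1) * base i"
    using lookup_f_base[OF u] by (simp add: base_def sum_distrib_left)
  moreover have "(\<Sum>j\<in>?tops. ?h j) = (\<Sum>v\<in>U. ?h (m + k v))"
    using inj_k by (simp add: sum.reindex inj_on_def)
  moreover have "\<sigma> u \<in> U" using permutes_in_image[OF perm] u by simp
  ultimately show ?thesis
    using row_eq[OF u, of i] row_eq[of "\<sigma> u" i] p_pos by (cases p) (auto simp: algebra_simps)
qed

lemma f_eq_diag_exponent: "\<sigma> = id \<and> (\<forall>u\<in>U. f u = diag_exponent u)"
proof -
  define \<nu> where "\<nu> u v = Poly_Mapping.lookup (f u) (m + k v)" for u v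
  have rows: "(\<Sum>v\<in>U. \<nu> u v * weight v) + weight (\<sigma> u) = p * weight u" if "u \<in> U" for u
    unfolding \<nu>_def weight_def by (rule radix_sum_linear_combination[OF row_identity_lookup_f[OF that]])
  have rowsum: "(\<Sum>v\<in>U. \<nu> u v) + 1 = p" if "u \<in> U" for u
    using row_identity_lookup_f[OF that, of "n + 1"] by (simp add: \<nu>_def aplus_def)
  have colsum: "(\<Sum>u\<in>U. \<nu> u v) = p - 1" if "v \<in> U" for v
    using column_sum_lookup_f[OF that] by (simp add: \<nu>_def)
  have diag: "\<sigma> u = u \<and> (\<forall>v\<in>U. \<nu> u v = (if v = u then p - 1 else 0))" if "u \<in> U" for u
    using balanced_matrix_diagonal[OF finite_U perm inj_on_weight rows rowsum colsum that] .
  have "\<sigma> = id"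
  proof
    fix x show "\<sigma> x = id x" using diag permutes_not_in[OF perm, of x] by (cases "x \<in> U") auto
  qed
  moreover have "f u = diag_exponent u" if u: "u \<in> U" for u
  proof (rule poly_mapping_eqI)
    fix j
    consider "j \<in> {1..m}" | v where "v \<in> U" "j = m + k v" | "j \<notin> {1..m}" "j \<notin> (\<lambda>v. m + k v) ` U"
      by blast
    then show "Poly_Mapping.lookup (f u) j = Poly_Mapping.lookup (diag_exponent u) j"
    proof cases
      case 1
      then show ?thesis by (simp add: lookup_f_base[OF u] lookup_diag_exponent)
    next
      case (2 v)
      then show ?thesis
        using diag[OF u] k_range[OF \<open>v \<in> U\<close>] inj_onD[OF inj_k _ \<open>v \<in> U\<close> u]
        by (auto simp: \<nu>_def lookup_diag_exponent)
    next
      case 3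
      then show ?thesis using u by (auto simp: lookup_f_outside[OF u] lookup_diag_exponent)
    qed
  qed
  ultimately show ?thesis by blast
qed

end

lemma det_on_AIbar_neq_0:
  assumes p: "CARD('q::prime_card) = p"
  shows "det_on U (AIbar n d N I a :: _ \<Rightarrow> _ \<Rightarrow> (_ \<Rightarrow>\<^sub>0 'q mod_ring)) \<noteq> 0"
proof (rule det_on_neq_0_by_unique_term[where S = "AI_exponents p n N a"
    and c = "\<lambda>\<nu>. red_mod (AI_coeff I d N \<nu>)" and g = diag_exponent, OF finite_U finite_AI_exponents])
  show "AIbar n d N I a u v = (\<Sum>\<nu>\<in>AI_exponents p n N a u v.
      Poly_Mapping.single \<nu> (red_mod (AI_coeff I d N \<nu>) :: 'q mod_ring))" for u v
    unfolding p[symmetric] by (rule AIbar_eq_sum_single)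
  show "diag_exponent u \<in> AI_exponents p n N a u u" if "u \<in> U" for u
    using that by (rule diag_exponent_in_AI_exponents)
  show "(red_mod (AI_coeff I d N (diag_exponent u)) :: 'q mod_ring) \<noteq> 0" for u
    using p p_pos by (simp add: red_mod_AI_coeff_neq_0_iff lookup_diag_exponent)
  show "\<sigma> = id \<and> (\<forall>u\<in>U. f u = diag_exponent u)"
    if "\<sigma> permutes U" "f \<in> (\<Pi>\<^sub>E u\<in>U. AI_exponents p n N a u (\<sigma> u))"
      "(\<Sum>u\<in>U. f u) = (\<Sum>u\<in>U. diag_exponent u)"
      "\<forall>u\<in>U. (red_mod (AI_coeff I d N (f u)) :: 'q mod_ring) \<noteq> 0" for \<sigma> f
    using that p by (intro f_eq_diag_exponent) (auto simp: red_mod_AI_coeff_neq_0_iff)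
qed

end

lemma UImin_parametrized_rows:
  fixes n d N :: nat and I :: "nat set" and a :: "nat \<Rightarrow> nat \<Rightarrow> nat"
  assumes "0 < p"
    and coordinate_sum: "\<forall>j\<in>{1..N}. (\<Sum>i\<le>n. a j i) = d"
    and card_bound: "int N \<ge> muI I d + int (card (UImin n d I))"
    and rows: "\<forall>u\<in>UImin n d I. \<exists>\<kappa>. 1 \<le> \<kappa> \<and> \<kappa> \<le> card (UImin n d I) \<and>
           u = (\<lambda>i. aplus a n (nat (muI I d + int \<kappa>)) i + (\<Sum>j\<in>{1..nat (muI I d)}. aplus a n j i))"
  obtains k where "parametrized_rows p n d N (nat (muI I d)) a (UImin n d I) k"
proof -
  define U where "U = UImin n d I"
  define m where "m = nat (muI I d)"
  define row where "row \<kappa> = (\<lambda>i. aplus a n (nat (muI I d + int \<kappa>)) i + (\<Sum>j\<in>{1..m}. aplus a n j i))" for \<kappa>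
  obtain k where k_bounds: "\<And>u. u \<in> U \<Longrightarrow> 1 \<le> k u \<and> k u \<le> card U"
    and k_row: "\<And>u. u \<in> U \<Longrightarrow> u = row (k u)"
    using rows unfolding U_def m_def row_def by metis
  have mu: "muI I d = int m" if "u \<in> U" for u
  proof -
    have "int (u (n + 1)) = muI I d + 1" using that by (simp add: U_def UImin_def)
    moreover have "u (n + 1) = row (k u) (n + 1)" using k_row[OF that] by (rule fun_cong)
    ultimately show ?thesis by (simp add: row_def aplus_def)
  qed
  have "U \<subseteq> row ` {1..card U}"
  proof
    fix u assume "u \<in> U"
    then have "k u \<in> {1..card U}" using k_bounds by simp
    then show "u \<in> row ` {1..card U}" using k_row[OF \<open>u \<in> U\<close>] by (rule rev_image_eqI)
  qed
  then have "finite U" by (rule finite_subset) simp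
  have "parametrized_rows p n d N m a U k"
  proof
    show "0 < p" by fact
    show "(\<Sum>i\<le>n. a j i) = d" if "j \<in> {1..N}" for j using coordinate_sum that by blast
    show "finite U" by fact
    show "inj_on k U"
    proof (rule inj_onI)
      fix u v assume "u \<in> U" "v \<in> U" "k u = k v"
      then show "u = v" using k_row[OF \<open>u \<in> U\<close>] k_row[OF \<open>v \<in> U\<close>] by metis
    qed
    show "1 \<le> k u \<and> m + k u \<le> N" if "u \<in> U" for u
      using k_bounds[OF that] mu[OF that] card_bound unfolding U_def by linarith
    show "u = (\<lambda>i. aplus a n (m + k u) i + (\<Sum>j\<in>{1..m}. aplus a n j i))" if "u \<in> U" for u
    proof -
      have "row (k u) = (\<lambda>i. aplus a n (m + k u) i + (\<Sum>j\<in>{1..m}. aplus a n j i))"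
        using mu[OF that] by (simp add: row_def nat_int_add)
      with k_row[OF that] show ?thesis by (rule trans)
    qed
  qed
  then show ?thesis using that unfolding U_def m_def by blast
qed

theorem theorem7p2:
  fixes n d N :: nat and I :: "nat set" and a :: "nat \<Rightarrow> nat \<Rightarrow> nat"
  assumes "n \<ge> 1" and "d \<ge> 2" and "I \<subseteq> {0..n}"
    and "\<forall>j\<in>{1..N}. (\<Sum>i\<le>n. a j i) = d"
    and "int N \<ge> muI I d + int (card (UImin n d I))"
    and "\<forall>u\<in>UImin n d I. \<exists>k. 1 \<le> k \<and> k \<le> card (UImin n d I) \<and>
           u = (\<lambda>i. aplus a n (nat (muI I d + int k)) i
                    + (\<Sum>j\<in>{1..nat (muI I d)}. aplus a n j i))"
  shows "det_on (UImin n d I) (AIbar n d N I a :: (nat \<Rightarrow> nat) \<Rightarrow> (nat \<Rightarrow> nat)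
            \<Rightarrow> ((nat \<Rightarrow>\<^sub>0 nat) \<Rightarrow>\<^sub>0 'p::prime_card mod_ring)) \<noteq> 0"
proof -
  obtain k where "parametrized_rows CARD('p) n d N (nat (muI I d)) a (UImin n d I) k"
    using prime_gt_0_nat[OF prime_card] assms(4-6) by (rule UImin_parametrized_rows)
  then show ?thesis by (rule parametrized_rows.det_on_AIbar_neq_0) (rule refl)
qed

end
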